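(* Let $d>1$ and let $f\colon[0,1]^{d-1}\times[0,1]\to[0,\infty)$ be a continuous conditional density, i.e. $f$ is continuous and $\int_0^1 f(x,y)\,dy=1$ for every $x\in[0,1]^{d-1}$. Then for every $\epsilon>0$ there exists a (unit-integral-normalized) SPICE model $\hat f_\theta(y\mid x)$ such that $\sup_{(x,y)\in[0,1]^d}|f(x,y)-\hat f_\theta(y\mid x)|<\epsilon$.
   Context: A SPICE model of degree $n\ge 1$ with $K$ knots: a neural network maps $x\in[0,1]^{d-1}$ to sorted knot positions $0=t_1\le\dots\le t_K=1$ and heights. On each $[t_i,t_{i+1}]$, with points $\tau_i^j=t_i+(j-1)\frac{t_{i+1}-t_i}{n}$ ($j=1,\dots,n+1$) and heights $h_i^j$ (endpoint heights shared between consecutive pieces and positive, intermediate heights arbitrary reals), $p_i$ is the degree-$\le n$ Lagrange interpolating polynomial of $\{(\tau_i^j,h_i^j)\}_j$ and $\bar p_i=\max(p_i,0)$. The normalized SPICE density is $\hat f_\theta(y\mid x)=\bar p_\ell(y)\big/\sum_{i=1}^{K-1}\int_{t_i}^{t_{i+1}}\bar p_i(y')\,dy'$, where $t_\ell\le y<t_{\ell+1}$ (last piece at $y=1$), all parameters being the network outputs at $x$. The un-normalized model is $\bar p_\ell(y)$ without the division. *)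

theory Defs
  imports "HOL-Analysis.Analysis"
begin

definition relu :: "real \<Rightarrow> real" where
  "relu z = max 0 z"

definition affine_layer :: "real list list \<Rightarrow> real list \<Rightarrow> real list \<Rightarrow> real list" where
  "affine_layer W b v = map2 (\<lambda>row c. sum_list (map2 (*) row v) + c) W b"

fun nn_rest :: "(real list list \<times> real list) list \<Rightarrow> real list \<Rightarrow> real list" where
  "nn_rest [] v = v"
| "nn_rest ((W, b) # Ls) v = nn_rest Ls (affine_layer W b (map relu v))"

text \<open>A network = first affine layer (acting on the input vector) followed by
  further layers, each preceded by a ReLU activation; the output is affine.\<close>
type_synonym 'n network = "((real^'n) \<times> real) list \<times> (real list list \<times> real list) list"

definition nn_eval :: "'n::finite network \<Rightarrow> real^'n \<Rightarrow> real list" where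
  "nn_eval N x = nn_rest (snd N) (map (\<lambda>(w, c). w \<bullet> x + c) (fst N))"

definition unit_cube :: "(real^'n::finite) set" where
  "unit_cube = {x. \<forall>i. 0 \<le> x $ i \<and> x $ i \<le> 1}"

text \<open>Conventions (0-indexed): degree n, K knots t 0 .. t (K-1), pieces i < K-1 on
  [t i, t (i+1)].
  Heights are stored globally: node j of piece i has height H (i*n+j), so endpoint heights
  H (i*n) are shared between consecutive pieces. The network output list is
  [t 0, ..., t (K-1), H 0, ..., H ((K-1)*n)].\<close>

definition spice_knot :: "nat \<Rightarrow> real list \<Rightarrow> nat \<Rightarrow> real" where
  "spice_knot K out i = out ! i"

definition spice_height :: "nat \<Rightarrow> real list \<Rightarrow> nat \<Rightarrow> real" where
  "spice_height K out g = out ! (K + g)"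

definition lagrange_interp :: "nat \<Rightarrow> (nat \<Rightarrow> real) \<Rightarrow> (nat \<Rightarrow> real) \<Rightarrow> real \<Rightarrow> real" where
  "lagrange_interp n xs ys y =
     (\<Sum>j\<le>n. ys j * (\<Prod>k\<in>{..n} - {j}. (y - xs k) / (xs j - xs k)))"

definition spice_poly :: "nat \<Rightarrow> (nat \<Rightarrow> real) \<Rightarrow> (nat \<Rightarrow> real) \<Rightarrow> nat \<Rightarrow> real \<Rightarrow> real" where
  "spice_poly n t H i y =
     lagrange_interp n (\<lambda>j. t i + real j * (t (Suc i) - t i) / real n) (\<lambda>j. H (i * n + j)) y"

definition spice_pbar :: "nat \<Rightarrow> (nat \<Rightarrow> real) \<Rightarrow> (nat \<Rightarrow> real) \<Rightarrow> nat \<Rightarrow> real \<Rightarrow> real" where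
  "spice_pbar n t H i y = max 0 (spice_poly n t H i y)"

text \<open>Index of the piece containing y: the largest i < K-1 with t i \<le> y
  (so t i \<le> y < t (i+1) for y < 1, and the last piece for y = 1).\<close>
definition spice_index :: "nat \<Rightarrow> (nat \<Rightarrow> real) \<Rightarrow> real \<Rightarrow> nat" where
  "spice_index K t y = Max {i. i < K - 1 \<and> t i \<le> y}"

definition spice_unnorm :: "nat \<Rightarrow> nat \<Rightarrow> (nat \<Rightarrow> real) \<Rightarrow> (nat \<Rightarrow> real) \<Rightarrow> real \<Rightarrow> real" where
  "spice_unnorm n K t H y = spice_pbar n t H (spice_index K t y) y"

definition spice_normalizer :: "nat \<Rightarrow> nat \<Rightarrow> (nat \<Rightarrow> real) \<Rightarrow> (nat \<Rightarrow> real) \<Rightarrow> real" where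
  "spice_normalizer n K t H = (\<Sum>i<K - 1. integral {t i..t (Suc i)} (spice_pbar n t H i))"

definition spice_density :: "nat \<Rightarrow> nat \<Rightarrow> 'n::finite network \<Rightarrow> real^'n \<Rightarrow> real \<Rightarrow> real" where
  "spice_density n K N x y =
     (let out = nn_eval N x; t = spice_knot K out; H = spice_height K out
      in spice_unnorm n K t H y / spice_normalizer n K t H)"

definition spice_net :: "nat \<Rightarrow> nat \<Rightarrow> 'n::finite network \<Rightarrow> bool" where
  "spice_net n K N \<longleftrightarrow> 1 \<le> n \<and> 2 \<le> K \<and>
     (\<forall>x \<in> unit_cube.
        let out = nn_eval N x; t = spice_knot K out; H = spice_height K out in
        length out = K + (K - 1) * n + 1 \<and>
        t 0 = 0 \<and> t (K - 1) = 1 \<and>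
        (\<forall>i < K - 1. t i \<le> t (Suc i)) \<and>
        (\<forall>i \<le> K - 1. H (i * n) > 0))"

end

theory Submission
  imports Defs
begin

text \<open>Every continuous function on the unit cube is a uniform limit of ReLU networks: it is
  approximated by a maximum of finitely many cones g p - C |x - p|_1, and maxima, sums and
  absolute values of network functions are again network functions. Fix a fine uniform grid
  i / M in y, on whose cells f x oscillates by at most \<eta>, and let positive networks
  approximate the grid values f x (i / M). They are the heights of a degree-one SPICE model
  with knots i / M, whose linear pieces are then within 3 \<eta> of f x. Integrating, the
  normalizer is within 3 \<eta> of 1, so the normalized density is within O(\<eta>) of f.\<close>

section \<open>ReLU networks\<close>

definition layer_entry :: "real list list \<Rightarrow> nat \<Rightarrow> nat \<Rightarrow> real" where
  "layer_entry W j k = (if k < length (W ! j) then W ! j ! k else 0)"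

lemma sum_list_map2_times:
  fixes r v :: "real list"
  shows "sum_list (map2 (*) r v) = (\<Sum>k<length v. (if k < length r then r ! k else 0) * v ! k)"
proof -
  have "sum_list (map2 (*) r v) = (\<Sum>k<min (length r) (length v). r ! k * v ! k)"
    by (simp add: sum_list_sum_nth atLeast0LessThan)
  also have "\<dots> = (\<Sum>k<length v. (if k < length r then r ! k else 0) * v ! k)"
    by (rule sum.mono_neutral_cong_left) auto
  finally show ?thesis .
qed

lemma length_affine_layer [simp]: "length (affine_layer W b v) = min (length W) (length b)"
  by (simp add: affine_layer_def)

lemma affine_layer_nth:
  "j < min (length W) (length b) \<Longrightarrow>
   affine_layer W b v ! j = (\<Sum>k<length v. layer_entry W j k * v ! k) + b ! j"
  by (simp add: affine_layer_def sum_list_map2_times layer_entry_def)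

lemma affine_layer_tabulate:
  assumes "length v = m"
  shows "affine_layer (map (\<lambda>j. map (R j) [0..<m]) [0..<p]) (map B [0..<p]) v
         = map (\<lambda>j. (\<Sum>k<m. R j k * v ! k) + B j) [0..<p]"
  using assms by (intro nth_equalityI) (simp_all add: affine_layer_nth layer_entry_def)

lemma nn_rest_snoc: "nn_rest (Ls @ [(W, b)]) v = affine_layer W b (map relu (nn_rest Ls v))"
  by (induction Ls arbitrary: v) auto

lemma nn_rest_Cons_layer: "nn_rest (L # Ls) v = nn_rest Ls (affine_layer (fst L) (snd L) (map relu v))"
  by (cases L) simp

lemma relu_minus_relu_neg: "relu z - relu (- z) = z"
  by (simp add: relu_def)

definition net_realizes :: "nat \<Rightarrow> nat \<Rightarrow> (nat \<Rightarrow> real^'n::finite \<Rightarrow> real) \<Rightarrow> bool" where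
  "net_realizes d m F \<longleftrightarrow>
     (\<exists>N::'n network. length (snd N) = d \<and> (\<forall>x. nn_eval N x = map (\<lambda>j. F j x) [0..<m]))"

definition net_realizable :: "nat \<Rightarrow> (nat \<Rightarrow> real^'n::finite \<Rightarrow> real) \<Rightarrow> bool" where
  "net_realizable m F \<longleftrightarrow> (\<exists>d. net_realizes d m F)"

lemma net_realizes_affine: "net_realizes 0 m (\<lambda>j x. w j \<bullet> x + c j)"
  unfolding net_realizes_def
  by (rule exI[of _ "(map (\<lambda>j. (w j, c j)) [0..<m], [])"]) (simp add: nn_eval_def)

lemma net_realizes_relu_layer:
  assumes "net_realizes d m F"
  shows "net_realizes (Suc d) p (\<lambda>j x. (\<Sum>k<m. R j k * relu (F k x)) + B j)"
proof -
  obtain N where N: "length (snd N) = d" "\<And>x. nn_eval N x = map (\<lambda>j. F j x) [0..<m]"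
    using assms unfolding net_realizes_def by blast
  let ?N = "(fst N, snd N @ [(map (\<lambda>j. map (R j) [0..<m]) [0..<p], map B [0..<p])])"
  have "nn_eval ?N x = map (\<lambda>j. (\<Sum>k<m. R j k * relu (F k x)) + B j) [0..<p]" for x
    by (simp add: nn_eval_def nn_rest_snoc affine_layer_tabulate N(2)[unfolded nn_eval_def])
  then show ?thesis
    unfolding net_realizes_def using N(1) by (intro exI[of _ ?N]) simp
qed

text \<open>A network gets one layer deeper without changing its function by duplicating its first
  layer with opposite sign and recombining through relu z - relu (- z) = z.\<close>
lemma net_realizes_Suc:
  assumes "net_realizes d m F"
  shows "net_realizes (Suc d) m F"
proof -
  obtain A Ls where N: "length Ls = d" "\<And>x. nn_eval (A, Ls) x = map (\<lambda>j. F j x) [0..<m]"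
    using assms unfolding net_realizes_def by force
  define a where "a = length A"
  define R where "R = (\<lambda>j k. if k = j then 1 else if k = j + a then -1 else (0::real))"
  let ?L = "(map (\<lambda>j. map (R j) [0..<2 * a]) [0..<a], map (\<lambda>j. 0) [0..<a])"
  let ?N = "(A @ map (\<lambda>(w, c). (- w, - c)) A, ?L # Ls)"
  have "nn_eval ?N x = nn_eval (A, Ls) x" for x
  proof -
    define z where "z = map (\<lambda>(w, c). w \<bullet> x + c) A"
    let ?v = "map relu (z @ map uminus z)"
    have lz: "length z = a" by (simp add: z_def a_def)
    have "(\<Sum>k<2 * a. R j k * ?v ! k) = z ! j" if j: "j < a" for j
    proof -
      have "(\<Sum>k<2 * a. R j k * ?v ! k)
          = (\<Sum>k<2 * a. (if k = j then ?v ! k else 0) - (if k = j + a then ?v ! k else 0))"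
        by (rule sum.cong) (auto simp: R_def)
      also have "\<dots> = ?v ! j - ?v ! (j + a)"
        using j by (simp add: sum_subtractf)
      also have "\<dots> = z ! j"
        using j lz by (simp add: nth_append relu_minus_relu_neg)
      finally show ?thesis .
    qed
    then have "affine_layer (fst ?L) (snd ?L) ?v = z"
      using lz by (intro nth_equalityI) (simp_all add: affine_layer_tabulate)
    moreover have "map (\<lambda>(w, c). w \<bullet> x + c) (map (\<lambda>(w, c). (- w, - c)) A) = map uminus z"
      by (auto simp: z_def)
    then have "nn_eval ?N x = nn_rest (?L # Ls) (z @ map uminus z)"
      unfolding nn_eval_def fst_conv snd_conv map_append z_def by (simp only:)
    ultimately show ?thesis
      by (simp only: nn_rest_Cons_layer) (simp add: nn_eval_def z_def)
  qed
  then show ?thesis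
    unfolding net_realizes_def using N by (intro exI[of _ ?N]) simp
qed

lemma net_realizes_mono:
  assumes "net_realizes d m F" "d \<le> d'"
  shows "net_realizes d' m F"
  using assms(2,1) by (induction d' rule: dec_induct) (auto intro: net_realizes_Suc)

text \<open>Block-diagonal layer: (W1, b1) acts on the first m1 inputs, (W2, b2) on the next m2.\<close>
definition block_layer :: "nat \<Rightarrow> nat \<Rightarrow> real list list \<Rightarrow> real list \<Rightarrow> real list list \<Rightarrow> real list
     \<Rightarrow> real list list \<times> real list" where
  "block_layer m1 m2 W1 b1 W2 b2 =
    (let p1 = min (length W1) (length b1); p2 = min (length W2) (length b2);
         R = (\<lambda>j k. if j < p1 then (if k < m1 then layer_entry W1 j k else 0)
                    else (if m1 \<le> k then layer_entry W2 (j - p1) (k - m1) else 0));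
         B = (\<lambda>j. if j < p1 then b1 ! j else b2 ! (j - p1))
     in (map (\<lambda>j. map (R j) [0..<m1 + m2]) [0..<p1 + p2], map B [0..<p1 + p2]))"

lemma sum_lessThan_add:
  fixes g :: "nat \<Rightarrow> real"
  shows "(\<Sum>k<m1 + m2. g k) = (\<Sum>k<m1. g k) + (\<Sum>k<m2. g (m1 + k))"
proof -
  have "(\<Sum>k<m1 + m2. g k) = (\<Sum>k\<in>{0..<m1}. g k) + (\<Sum>k\<in>{m1..<m1 + m2}. g k)"
    by (simp add: sum.atLeastLessThan_concat lessThan_atLeast0)
  also have "(\<Sum>k\<in>{m1..<m1 + m2}. g k) = (\<Sum>k<m2. g (m1 + k))"
    using sum.shift_bounds_nat_ivl[of g 0 m1 m2] by (simp add: lessThan_atLeast0 add.commute)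
  finally show ?thesis by (simp add: lessThan_atLeast0)
qed

lemma affine_layer_block_layer:
  assumes "length u1 = m1" "length u2 = m2"
  shows "affine_layer (fst (block_layer m1 m2 W1 b1 W2 b2)) (snd (block_layer m1 m2 W1 b1 W2 b2)) (u1 @ u2)
       = affine_layer W1 b1 u1 @ affine_layer W2 b2 u2"
proof -
  define p1 where "p1 = min (length W1) (length b1)"
  define p2 where "p2 = min (length W2) (length b2)"
  define R where "R = (\<lambda>j k. if j < p1 then (if k < m1 then layer_entry W1 j k else 0)
                    else (if m1 \<le> k then layer_entry W2 (j - p1) (k - m1) else 0))"
  define B where "B = (\<lambda>j. if j < p1 then b1 ! j else b2 ! (j - p1))"
  have blk: "block_layer m1 m2 W1 b1 W2 b2
      = (map (\<lambda>j. map (R j) [0..<m1 + m2]) [0..<p1 + p2], map B [0..<p1 + p2])"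
    unfolding block_layer_def Let_def p1_def p2_def R_def B_def ..
  have row: "(\<Sum>k<m1 + m2. R j k * (u1 @ u2) ! k) + B j = (affine_layer W1 b1 u1 @ affine_layer W2 b2 u2) ! j"
    if j: "j < p1 + p2" for j
  proof (cases "j < p1")
    case True
    have "(\<Sum>k<m2. R j (m1 + k) * u2 ! k) = 0"
      by (rule sum.neutral) (simp add: R_def True)
    then show ?thesis
      using True assms by (simp add: sum_lessThan_add nth_append R_def B_def affine_layer_nth p1_def)
  next
    case False
    have "(\<Sum>k<m1. R j k * u1 ! k) = 0"
      by (rule sum.neutral) (simp add: R_def False)
    moreover have "(\<Sum>k<m2. R j (m1 + k) * u2 ! k) = (\<Sum>k<m2. layer_entry W2 (j - p1) k * u2 ! k)"
      by (simp add: R_def False)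
    moreover have "(affine_layer W1 b1 u1 @ affine_layer W2 b2 u2) ! j
        = (\<Sum>k<m2. layer_entry W2 (j - p1) k * u2 ! k) + b2 ! (j - p1)"
    proof -
      have "j - p1 < min (length W2) (length b2)" using j False unfolding p2_def by linarith
      then show ?thesis
        using False assms by (simp add: nth_append affine_layer_nth flip: p1_def)
    qed
    ultimately show ?thesis
      using False assms by (simp add: sum_lessThan_add nth_append B_def)
  qed
  have "affine_layer (fst (block_layer m1 m2 W1 b1 W2 b2)) (snd (block_layer m1 m2 W1 b1 W2 b2)) (u1 @ u2)
      = map (\<lambda>j. (\<Sum>k<m1 + m2. R j k * (u1 @ u2) ! k) + B j) [0..<p1 + p2]"
    unfolding blk fst_conv snd_conv by (rule affine_layer_tabulate) (simp add: assms)
  also have "\<dots> = affine_layer W1 b1 u1 @ affine_layer W2 b2 u2"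
    by (rule nth_equalityI) (simp_all add: row p1_def p2_def del: upt_Suc)
  finally show ?thesis .
qed

fun block_layers :: "nat \<Rightarrow> nat \<Rightarrow> (real list list \<times> real list) list \<Rightarrow> (real list list \<times> real list) list
     \<Rightarrow> (real list list \<times> real list) list" where
  "block_layers m1 m2 ((W1, b1) # L1) ((W2, b2) # L2) =
     block_layer m1 m2 W1 b1 W2 b2 #
     block_layers (min (length W1) (length b1)) (min (length W2) (length b2)) L1 L2"
| "block_layers m1 m2 _ _ = []"

lemma length_block_layers: "length (block_layers m1 m2 L1 L2) = min (length L1) (length L2)"
  by (induction m1 m2 L1 L2 rule: block_layers.induct) auto

lemma nn_rest_block_layers:
  assumes "length L1 = length L2" "length v1 = m1" "length v2 = m2"
  shows "nn_rest (block_layers m1 m2 L1 L2) (v1 @ v2) = nn_rest L1 v1 @ nn_rest L2 v2"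
  using assms
proof (induction L1 arbitrary: L2 m1 m2 v1 v2)
  case Nil
  then show ?case by simp
next
  case (Cons l1 L1)
  obtain W1 b1 where l1: "l1 = (W1, b1)" by (cases l1)
  obtain W2 b2 L2' where L2: "L2 = (W2, b2) # L2'" using Cons.prems by (cases L2) auto
  have "nn_rest (block_layers m1 m2 (l1 # L1) L2) (v1 @ v2)
      = nn_rest (block_layers (min (length W1) (length b1)) (min (length W2) (length b2)) L1 L2')
          (affine_layer W1 b1 (map relu v1) @ affine_layer W2 b2 (map relu v2))"
    using Cons.prems affine_layer_block_layer[of "map relu v1" m1 "map relu v2" m2 W1 b1 W2 b2]
    by (simp only: l1 L2 block_layers.simps nn_rest_Cons_layer map_append) simp
  also have "\<dots> = nn_rest (l1 # L1) v1 @ nn_rest L2 v2"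
    using Cons.prems by (subst Cons.IH) (auto simp: l1 L2)
  finally show ?case .
qed

lemma net_realizes_append:
  assumes "net_realizes d m F" "net_realizes d p G"
  shows "net_realizes d (m + p) (\<lambda>j x. if j < m then F j x else G (j - m) x)"
proof -
  obtain N1 where N1: "length (snd N1) = d" "\<And>x. nn_eval N1 x = map (\<lambda>j. F j x) [0..<m]"
    using assms(1) unfolding net_realizes_def by blast
  obtain N2 where N2: "length (snd N2) = d" "\<And>x. nn_eval N2 x = map (\<lambda>j. G j x) [0..<p]"
    using assms(2) unfolding net_realizes_def by blast
  let ?N = "(fst N1 @ fst N2, block_layers (length (fst N1)) (length (fst N2)) (snd N1) (snd N2))"
  have "nn_eval ?N x = nn_eval N1 x @ nn_eval N2 x" for x
    unfolding nn_eval_def fst_conv snd_conv map_append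
    by (rule nn_rest_block_layers) (use N1 N2 in auto)
  also have "nn_eval N1 x @ nn_eval N2 x = map (\<lambda>j. if j < m then F j x else G (j - m) x) [0..<m + p]" for x
    unfolding N1 N2 by (rule nth_equalityI) (auto simp: nth_append)
  finally show ?thesis
    unfolding net_realizes_def using N1 N2 by (intro exI[of _ ?N]) (auto simp: length_block_layers)
qed

lemma net_realizable_append:
  assumes "net_realizable m F" "net_realizable p G"
  shows "net_realizable (m + p) (\<lambda>j x. if j < m then F j x else G (j - m) x)"
proof -
  obtain d1 d2 where "net_realizes d1 m F" "net_realizes d2 p G"
    using assms unfolding net_realizable_def by blast
  then have "net_realizes (max d1 d2) m F" "net_realizes (max d1 d2) p G"
    by (auto intro: net_realizes_mono)
  then show ?thesis
    unfolding net_realizable_def using net_realizes_append by blast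
qed

lemma net_realizable_relu_layer:
  "net_realizable m F \<Longrightarrow> net_realizable p (\<lambda>j x. (\<Sum>k<m. R j k * relu (F k x)) + B j)"
  unfolding net_realizable_def using net_realizes_relu_layer by blast

lemma net_realizable_cong:
  assumes "net_realizable p F" "\<And>j x. j < p \<Longrightarrow> F j x = G j x"
  shows "net_realizable p G"
proof -
  have "map (\<lambda>j. F j x) [0..<p] = map (\<lambda>j. G j x) [0..<p]" for x
    using assms(2) by simp
  then show ?thesis
    using assms(1) unfolding net_realizable_def net_realizes_def by metis
qed

lemma net_realizable_affine: "net_realizable m (\<lambda>j x. w j \<bullet> x + c j)"
  unfolding net_realizable_def using net_realizes_affine by blast

text \<open>A ReLU layer sees its inputs only through relu; a family H that is realized together with
  its negation can be passed on unchanged, since H = relu H - relu (- H).\<close>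
definition net_realizable_pm :: "nat \<Rightarrow> (nat \<Rightarrow> real^'n::finite \<Rightarrow> real) \<Rightarrow> bool" where
  "net_realizable_pm p H \<longleftrightarrow> (\<exists>m F \<pi> \<nu>. net_realizable m F \<and>
      (\<forall>i<p. \<pi> i < m \<and> \<nu> i < m \<and> F (\<pi> i) = H i \<and> F (\<nu> i) = (\<lambda>x. - H i x)))"

lemma net_realizable_pm_cong:
  "net_realizable_pm p H \<Longrightarrow> (\<And>i. i < p \<Longrightarrow> H i = H' i) \<Longrightarrow> net_realizable_pm p H'"
  unfolding net_realizable_pm_def by (elim exE conjE) (intro exI conjI, assumption, simp)

lemma net_realizable_pm_affine: "net_realizable_pm p (\<lambda>i x. w i \<bullet> x + c i)"
proof -
  define F where "F = (\<lambda>j x. (if j < p then w j else - w (j - p)) \<bullet> x + (if j < p then c j else - c (j - p)))"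
  have "net_realizable (p + p) F"
    unfolding F_def by (rule net_realizable_affine)
  then show ?thesis
    unfolding net_realizable_pm_def
    by (intro exI[of _ "p + p"] exI[of _ F] exI[of _ "\<lambda>i. i"] exI[of _ "\<lambda>i. p + i"])
       (simp add: F_def fun_eq_iff)
qed

lemma net_realizable_pm_append:
  assumes "net_realizable_pm p H" "net_realizable_pm q G"
  shows "net_realizable_pm (p + q) (\<lambda>i. if i < p then H i else G (i - p))"
proof -
  obtain m1 F1 \<pi>1 \<nu>1 where A: "net_realizable m1 F1"
    "\<And>i. i < p \<Longrightarrow> \<pi>1 i < m1 \<and> \<nu>1 i < m1 \<and> F1 (\<pi>1 i) = H i \<and> F1 (\<nu>1 i) = (\<lambda>x. - H i x)"
    using assms(1) unfolding net_realizable_pm_def by blast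
  obtain m2 F2 \<pi>2 \<nu>2 where B: "net_realizable m2 F2"
    "\<And>i. i < q \<Longrightarrow> \<pi>2 i < m2 \<and> \<nu>2 i < m2 \<and> F2 (\<pi>2 i) = G i \<and> F2 (\<nu>2 i) = (\<lambda>x. - G i x)"
    using assms(2) unfolding net_realizable_pm_def by blast
  define F where "F = (\<lambda>j x. if j < m1 then F1 j x else F2 (j - m1) x)"
  define \<pi> where "\<pi> = (\<lambda>i. if i < p then \<pi>1 i else m1 + \<pi>2 (i - p))"
  define \<nu> where "\<nu> = (\<lambda>i. if i < p then \<nu>1 i else m1 + \<nu>2 (i - p))"
  have "net_realizable (m1 + m2) F"
    unfolding F_def by (rule net_realizable_append[OF A(1) B(1)])
  moreover have "\<pi> i < m1 + m2 \<and> \<nu> i < m1 + m2 \<and> F (\<pi> i) = (if i < p then H i else G (i - p))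
     \<and> F (\<nu> i) = (\<lambda>x. - (if i < p then H i else G (i - p)) x)" if i: "i < p + q" for i
  proof (cases "i < p")
    case True
    then show ?thesis using A(2)[OF True] by (simp add: \<pi>_def \<nu>_def F_def)
  next
    case False
    then have "i - p < q" using i by simp
    then show ?thesis using B(2)[OF \<open>i - p < q\<close>] False by (simp add: \<pi>_def \<nu>_def F_def)
  qed
  ultimately show ?thesis
    unfolding net_realizable_pm_def by blast
qed

lemma net_realizable_pm_relu_layer:
  assumes "net_realizable_pm p H"
  shows "net_realizable_pm q (\<lambda>i x. (\<Sum>k<p. R i k * H k x + S i k * relu (H k x)) + B i)"
proof -
  obtain m F \<pi> \<nu> where F: "net_realizable m F"
    "\<And>i. i < p \<Longrightarrow> \<pi> i < m \<and> \<nu> i < m \<and> F (\<pi> i) = H i \<and> F (\<nu> i) = (\<lambda>x. - H i x)"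
    using assms unfolding net_realizable_pm_def by blast
  define C where "C = (\<lambda>i l. \<Sum>k<p. (if \<pi> k = l then R i k + S i k else 0) - (if \<nu> k = l then R i k else 0))"
  have C: "(\<Sum>l<m. C i l * relu (F l x)) = (\<Sum>k<p. R i k * H k x + S i k * relu (H k x))" for i x
  proof -
    have "(\<Sum>l<m. C i l * relu (F l x))
        = (\<Sum>k<p. \<Sum>l<m. (if \<pi> k = l then (R i k + S i k) * relu (F l x) else 0)
                      - (if \<nu> k = l then R i k * relu (F l x) else 0))"
      unfolding C_def sum_distrib_right by (subst sum.swap) (auto intro!: sum.cong simp: algebra_simps)
    also have "\<dots> = (\<Sum>k<p. (R i k + S i k) * relu (H k x) - R i k * relu (- H k x))"
      by (intro sum.cong refl) (simp add: sum_subtractf F(2) sum.delta')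
    also have "\<dots> = (\<Sum>k<p. R i k * H k x + S i k * relu (H k x))"
    proof (intro sum.cong refl)
      fix k
      show "(R i k + S i k) * relu (H k x) - R i k * relu (- H k x) = R i k * H k x + S i k * relu (H k x)"
        using relu_minus_relu_neg[of "H k x"] by (simp add: algebra_simps)
    qed
    finally show ?thesis .
  qed
  define G where "G = (\<lambda>j x. (\<Sum>l<m. (if j < q then C j l else - C (j - q) l) * relu (F l x))
                              + (if j < q then B j else - B (j - q)))"
  have "net_realizable (q + q) G"
    unfolding G_def by (rule net_realizable_relu_layer[OF F(1)])
  moreover have "G i = (\<lambda>x. (\<Sum>k<p. R i k * H k x + S i k * relu (H k x)) + B i)"
    and "G (q + i) = (\<lambda>x. - ((\<Sum>k<p. R i k * H k x + S i k * relu (H k x)) + B i))"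
    if "i < q" for i
    using that by (simp_all add: G_def fun_eq_iff sum_negf C)
  ultimately show ?thesis
    unfolding net_realizable_pm_def
    by (intro exI[of _ "q + q"] exI[of _ G] exI[of _ "\<lambda>i. i"] exI[of _ "\<lambda>i. q + i"]) auto
qed

lemma net_realizable_of_pm:
  assumes "net_realizable_pm p H"
  shows "net_realizable p H"
proof -
  obtain m F \<pi> \<nu> where F: "net_realizable m F"
    "\<And>i. i < p \<Longrightarrow> \<pi> i < m \<and> \<nu> i < m \<and> F (\<pi> i) = H i \<and> F (\<nu> i) = (\<lambda>x. - H i x)"
    using assms unfolding net_realizable_pm_def by blast
  define R where "R = (\<lambda>j l. (if \<pi> j = l then 1 else 0) - (if \<nu> j = l then 1 else (0::real)))"
  have "net_realizable p (\<lambda>j x. (\<Sum>l<m. R j l * relu (F l x)) + 0)"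
    by (rule net_realizable_relu_layer[OF F(1)])
  moreover have "(\<Sum>l<m. R j l * relu (F l x)) + 0 = H j x" if j: "j < p" for j x
  proof -
    have "(\<Sum>l<m. R j l * relu (F l x))
        = (\<Sum>l<m. (if \<pi> j = l then relu (F l x) else 0) - (if \<nu> j = l then relu (F l x) else 0))"
      by (intro sum.cong) (auto simp: R_def)
    also have "\<dots> = relu (H j x) - relu (- H j x)"
      using F(2)[OF j] by (simp add: sum_subtractf sum.delta')
    finally show ?thesis by (simp add: relu_minus_relu_neg)
  qed
  ultimately show ?thesis
    by (rule net_realizable_cong)
qed

definition net_function :: "(real^'n::finite \<Rightarrow> real) \<Rightarrow> bool" where
  "net_function h \<longleftrightarrow> net_realizable_pm 1 (\<lambda>_. h)"

lemma net_function_affine: "net_function (\<lambda>x. w \<bullet> x + c)"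
  unfolding net_function_def using net_realizable_pm_affine[of 1 "\<lambda>_. w" "\<lambda>_. c"] by simp

lemma net_function_const: "net_function (\<lambda>x. c)"
  using net_function_affine[of 0 c] by simp

lemma net_function_lincomb:
  assumes "net_function h1" "net_function h2"
  shows "net_function (\<lambda>x. a * h1 x + b * h2 x + c)"
proof -
  let ?H = "\<lambda>i. if i < 1 then h1 else h2"
  have "net_realizable_pm (1 + 1) ?H"
    using assms unfolding net_function_def by (rule net_realizable_pm_append)
  then have "net_realizable_pm 1
      (\<lambda>i x. (\<Sum>k<(1 + 1::nat). (if k = 0 then a else b) * ?H k x + 0 * relu (?H k x)) + c)"
    by (rule net_realizable_pm_relu_layer)
  then show ?thesis
    unfolding net_function_def by (rule net_realizable_pm_cong) (simp add: fun_eq_iff)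
qed

lemma net_function_relu:
  assumes "net_function h"
  shows "net_function (\<lambda>x. relu (h x))"
proof -
  have "net_realizable_pm 1 (\<lambda>i x. (\<Sum>k<(1::nat). 0 * h x + 1 * relu (h x)) + 0)"
    using assms unfolding net_function_def by (rule net_realizable_pm_relu_layer)
  then show ?thesis
    unfolding net_function_def by (rule net_realizable_pm_cong) (simp add: fun_eq_iff)
qed

lemma net_function_add: "net_function h1 \<Longrightarrow> net_function h2 \<Longrightarrow> net_function (\<lambda>x. h1 x + h2 x)"
  using net_function_lincomb[of h1 h2 1 1 0] by simp

lemma net_function_scale: "net_function h \<Longrightarrow> net_function (\<lambda>x. a * h x + c)"
  using net_function_lincomb[of h h a 0 c] by simp

lemma net_function_max:
  assumes "net_function h1" "net_function h2"
  shows "net_function (\<lambda>x. max (h1 x) (h2 x))"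
proof -
  have "net_function (\<lambda>x. 1 * h2 x + (-1) * h1 x + 0)"
    by (rule net_function_lincomb[OF assms(2,1)])
  then have "net_function (\<lambda>x. relu (h2 x - h1 x))"
    by (intro net_function_relu) simp
  then have "net_function (\<lambda>x. 1 * h1 x + 1 * relu (h2 x - h1 x) + 0)"
    by (rule net_function_lincomb[OF assms(1)])
  moreover have "1 * h1 x + 1 * relu (h2 x - h1 x) + 0 = max (h1 x) (h2 x)" for x
    by (simp add: relu_def max_def)
  ultimately show ?thesis
    by simp
qed

lemma net_function_abs:
  assumes "net_function h"
  shows "net_function (\<lambda>x. \<bar>h x\<bar>)"
proof -
  have "net_function (\<lambda>x. relu (h x) + relu ((-1) * h x + 0))"
    using assms by (intro net_function_add net_function_relu net_function_scale)
  moreover have "relu (h x) + relu ((-1) * h x + 0) = \<bar>h x\<bar>" for x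
    by (simp add: relu_def)
  ultimately show ?thesis
    by simp
qed

lemma net_function_sum:
  assumes "finite P" "\<And>p. p \<in> P \<Longrightarrow> net_function (T p)"
  shows "net_function (\<lambda>x. \<Sum>p\<in>P. T p x)"
  using assms by (induction P rule: finite_induct) (auto intro: net_function_add net_function_const)

lemma net_function_Max:
  assumes "finite P" "P \<noteq> {}" "\<And>p. p \<in> P \<Longrightarrow> net_function (T p)"
  shows "net_function (\<lambda>x. MAX p\<in>P. T p x)"
  using assms
proof (induction P rule: finite_ne_induct)
  case (singleton p)
  then show ?case by simp
next
  case (insert p P)
  then have "net_function (\<lambda>x. max (T p x) (MAX p\<in>P. T p x))"
    by (intro net_function_max) auto
  then show ?case using insert by simp
qed

lemma net_realizable_of_net_functions:
  assumes "\<And>j. j < p \<Longrightarrow> net_function (F j)"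
  shows "net_realizable p F"
proof -
  have "net_realizable_pm p F"
    using assms
  proof (induction p)
    case 0
    show ?case using net_realizable_pm_affine[of 0] unfolding net_realizable_pm_def by auto
  next
    case (Suc p)
    then have "net_realizable_pm (p + 1) (\<lambda>i. if i < p then F i else (\<lambda>_. F p) (i - p))"
      by (intro net_realizable_pm_append) (auto simp: net_function_def)
    then show ?case
      unfolding Suc_eq_plus1 by (rule net_realizable_pm_cong) (auto simp: less_Suc_eq)
  qed
  then show ?thesis
    by (rule net_realizable_of_pm)
qed

section \<open>Uniform approximation on the unit cube\<close>

text \<open>Unlike Euclidean cones, cones in the l1 distance are piecewise affine, hence computed
  by ReLU networks.\<close>
definition l1_dist :: "real^'n::finite \<Rightarrow> real^'n \<Rightarrow> real" where
  "l1_dist x p = (\<Sum>i\<in>UNIV. \<bar>x $ i - p $ i\<bar>)"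

lemma dist_le_l1_dist: "dist x p \<le> l1_dist x p"
  unfolding l1_dist_def dist_norm using norm_le_l1_cart[of "x - p"] by simp

lemma l1_dist_le_dist: "l1_dist x (p :: real^'n::finite) \<le> real CARD('n) * dist x p"
proof -
  have "l1_dist x p \<le> (\<Sum>i\<in>(UNIV::'n set). dist x p)"
    unfolding l1_dist_def dist_norm
    by (intro sum_mono) (metis component_le_norm_cart vector_minus_component)
  then show ?thesis by simp
qed

lemma l1_dist_nonneg: "0 \<le> l1_dist x p"
  unfolding l1_dist_def by (simp add: sum_nonneg)

lemma net_function_l1_dist: "net_function (\<lambda>x. l1_dist x p)"
proof -
  have "net_function (\<lambda>x. \<bar>axis i 1 \<bullet> x + - (p $ i)\<bar>)" for i
    by (intro net_function_abs net_function_affine)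
  moreover have "axis i 1 \<bullet> x + - (p $ i) = x $ i - p $ i" for i x
    by (simp add: cart_eq_inner_axis inner_commute)
  ultimately show ?thesis
    unfolding l1_dist_def by (intro net_function_sum) auto
qed

text \<open>A cone of slope C at q stays below g + e once C \<delta> \<ge> 2 B: near x by uniform continuity,
  far from x because the cone has dropped by at least 2 B.\<close>
lemma cone_le:
  fixes g :: "real^'n::finite \<Rightarrow> real"
  assumes bound: "\<And>x. x \<in> S \<Longrightarrow> \<bar>g x\<bar> \<le> B"
    and modulus: "\<And>x x'. x \<in> S \<Longrightarrow> x' \<in> S \<Longrightarrow> dist x' x < \<delta> \<Longrightarrow> \<bar>g x' - g x\<bar> < e"
    and slope: "2 * B \<le> C * \<delta>" "0 \<le> C" "0 \<le> e"
    and "q \<in> S" "x \<in> S"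
  shows "g q - C * l1_dist x q \<le> g x + e"
proof (cases "dist q x < \<delta>")
  case True
  then have "g q \<le> g x + e" using modulus[of x q] assms(6,7) by simp
  moreover have "0 \<le> C * l1_dist x q" using slope by (simp add: l1_dist_nonneg)
  ultimately show ?thesis by linarith
next
  case False
  then have "\<delta> \<le> l1_dist x q" using dist_le_l1_dist[of x q] by (simp add: dist_commute)
  then have "2 * B \<le> C * l1_dist x q" using slope by (meson mult_left_mono order_trans)
  moreover have "g q \<le> B" "- B \<le> g x" using bound[of q] bound[of x] assms(6,7) by auto
  ultimately show ?thesis using slope by linarith
qed

lemma max_of_cones_approx:
  fixes g :: "real^'n::finite \<Rightarrow> real"
  assumes "compact S" "S \<noteq> {}" "continuous_on S g" "e > 0"
  shows "\<exists>P C. finite P \<and> P \<noteq> {} \<and> P \<subseteq> S \<and>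
           (\<forall>x\<in>S. \<bar>g x - (MAX p\<in>P. g p - C * l1_dist x p)\<bar> \<le> e)"
proof -
  obtain B where B: "\<And>x. x \<in> S \<Longrightarrow> \<bar>g x\<bar> \<le> B" "B > 0"
    using compact_imp_bounded[OF compact_continuous_image[OF assms(3,1)]]
    unfolding bounded_pos by auto
  obtain \<delta> where \<delta>: "\<delta> > 0" "\<And>x x'. x \<in> S \<Longrightarrow> x' \<in> S \<Longrightarrow> dist x' x < \<delta> \<Longrightarrow> \<bar>g x' - g x\<bar> < e/2"
    using compact_uniformly_continuous[OF assms(3,1)] assms(4)
    unfolding uniformly_continuous_on_def dist_real_def by (meson half_gt_zero)
  define C where "C = 2 * B / \<delta>"
  define D where "D = real CARD('n)"
  define r where "r = min \<delta> (e / (2 * (C * D + 1)))"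
  have C: "2 * B \<le> C * \<delta>" "0 \<le> C" using B \<delta> by (auto simp: C_def)
  have D: "0 \<le> D" by (simp add: D_def)
  have r: "0 < r" "r \<le> \<delta>" "C * D * r \<le> e / 2"
  proof -
    show "0 < r" "r \<le> \<delta>" using \<delta> assms(4) C D by (auto simp: r_def add_nonneg_pos)
    have "C * D * r \<le> C * D * (e / (2 * (C * D + 1)))"
      using C D by (intro mult_left_mono) (auto simp: r_def)
    also have "\<dots> = e / 2 * (C * D / (C * D + 1))"
      by (simp add: field_simps)
    also have "\<dots> \<le> e / 2"
      using assms(4) C D by (intro mult_left_le) (auto simp: add_nonneg_pos)
    finally show "C * D * r \<le> e / 2" .
  qed
  obtain P where P: "P \<subseteq> S" "finite P" "S \<subseteq> (\<Union>p\<in>P. ball p r)"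
    by (rule compactE_image[OF assms(1), of S "\<lambda>p. ball p r"]) (use r in force)+
  have "P \<noteq> {}" using P(3) assms(2) by auto
  moreover have "\<bar>g x - (MAX p\<in>P. g p - C * l1_dist x p)\<bar> \<le> e" if x: "x \<in> S" for x
  proof -
    obtain p where p: "p \<in> P" "dist p x < r" using P(3) x by (auto simp: dist_commute)
    have "\<bar>g p - g x\<bar> < e/2" using \<delta>(2)[of x p] p r P(1) x by auto
    moreover have "C * l1_dist x p \<le> C * D * r"
      using l1_dist_le_dist[of x p] p C D
      by (metis D_def dist_commute less_imp_le mult.assoc mult_left_mono order_trans)
    moreover have "g p - C * l1_dist x p \<le> (MAX p\<in>P. g p - C * l1_dist x p)"
      using P(2) p(1) by (intro Max_ge) auto
    moreover have "g q - C * l1_dist x q \<le> g x + e/2" if "q \<in> P" for q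
      by (rule cone_le[of S g B \<delta> "e/2" C]) (use B(1) \<delta>(2) C assms(4) that P(1) x in auto)
    then have "(MAX q\<in>P. g q - C * l1_dist x q) \<le> g x + e/2"
      using P(2) \<open>P \<noteq> {}\<close> by (subst Max_le_iff) auto
    ultimately show ?thesis using r(3) by linarith
  qed
  ultimately show ?thesis using P(1,2) by blast
qed

lemma unit_cube_eq_cbox: "(unit_cube :: (real^'n::finite) set) = cbox 0 1"
  unfolding unit_cube_def by (auto simp: mem_box_cart)

lemma compact_unit_cube: "compact (unit_cube :: (real^'n::finite) set)"
  unfolding unit_cube_eq_cbox by (rule compact_cbox)

lemma net_function_approx:
  fixes g :: "real^'n::finite \<Rightarrow> real"
  assumes "continuous_on unit_cube g" "e > 0"
  shows "\<exists>h. net_function h \<and> (\<forall>x\<in>unit_cube. \<bar>g x - h x\<bar> \<le> e)"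
proof -
  have "(0::real^'n) \<in> unit_cube" by (simp add: unit_cube_def)
  then obtain P C where P: "finite P" "P \<noteq> {}"
    and approx: "\<forall>x\<in>unit_cube. \<bar>g x - (MAX p\<in>P. g p - C * l1_dist x p)\<bar> \<le> e"
    using max_of_cones_approx[OF compact_unit_cube _ assms] by blast
  have "net_function (\<lambda>x. (- C) * l1_dist x p + g p)" for p
    by (rule net_function_scale[OF net_function_l1_dist])
  then have "net_function (\<lambda>x. MAX p\<in>P. g p - C * l1_dist x p)"
    using P by (intro net_function_Max) auto
  then show ?thesis using approx by blast
qed

section \<open>Degree-one SPICE models on a uniform grid\<close>

lemma lagrange_interp_one:
  "lagrange_interp 1 xs ys y = ys 0 * ((y - xs 1) / (xs 0 - xs 1)) + ys 1 * ((y - xs 0) / (xs 1 - xs 0))"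
proof -
  have "{..(1::nat)} = {0, 1}" by auto
  moreover have "{0, Suc 0} - {0} = {Suc 0}" "{0, Suc 0} - {Suc 0} = {0::nat}" by auto
  ultimately show ?thesis
    unfolding lagrange_interp_def by simp
qed

lemma spice_poly_one_eq:
  fixes y :: real
  assumes "t i \<noteq> t (Suc i)"
  defines "l \<equiv> (y - t i) / (t (Suc i) - t i)"
  shows "spice_poly 1 t H i y = (1 - l) * H i + l * H (Suc i)"
proof -
  have "(y - t (Suc i)) / (t i - t (Suc i)) = 1 - l"
    using assms by (simp add: field_simps)
  then show ?thesis
    unfolding spice_poly_def lagrange_interp_one l_def by (simp add: mult.commute)
qed

lemma continuous_on_spice_pbar_one:
  assumes "t i \<noteq> t (Suc i)"
  shows "continuous_on S (spice_pbar 1 t H i)"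
  unfolding spice_pbar_def spice_poly_one_eq[OF assms] using assms by (intro continuous_intros) auto

lemma abs_convex_comb_le:
  fixes u v c l r :: real
  assumes "0 \<le> l" "l \<le> 1" "\<bar>u - c\<bar> \<le> r" "\<bar>v - c\<bar> \<le> r"
  shows "\<bar>(1 - l) * u + l * v - c\<bar> \<le> r"
proof -
  have "\<bar>(1 - l) * u + l * v - c\<bar> = \<bar>(1 - l) * (u - c) + l * (v - c)\<bar>"
    by (simp add: algebra_simps)
  also have "\<dots> \<le> (1 - l) * \<bar>u - c\<bar> + l * \<bar>v - c\<bar>"
    using assms(1,2) abs_triangle_ineq[of "(1 - l) * (u - c)" "l * (v - c)"] by (simp add: abs_mult)
  also have "\<dots> \<le> (1 - l) * r + l * r"
    using assms by (intro add_mono mult_left_mono) auto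
  finally show ?thesis by (simp add: algebra_simps)
qed

context
  fixes M :: nat and t H :: "nat \<Rightarrow> real" and fx :: "real \<Rightarrow> real" and \<eta> B :: real
  assumes M: "M \<ge> 1"
    and knots: "\<And>i. i \<le> M \<Longrightarrow> t i = real i / real M"
    and heights: "\<And>g. g \<le> M \<Longrightarrow> \<bar>H g - fx (real g / real M)\<bar> \<le> 2 * \<eta>"
    and oscillation: "\<And>y y'. y \<in> {0..1} \<Longrightarrow> y' \<in> {0..1} \<Longrightarrow> \<bar>y - y'\<bar> \<le> 1 / real M \<Longrightarrow>
       \<bar>fx y - fx y'\<bar> \<le> \<eta>"
    and density: "(fx has_integral 1) {0..1}"
    and range: "\<And>y. y \<in> {0..1} \<Longrightarrow> 0 \<le> fx y \<and> fx y \<le> B"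
    and small: "0 < \<eta>" "\<eta> \<le> 1/12"
begin

lemma grid_knot_bounds: "i \<le> M \<Longrightarrow> 0 \<le> t i \<and> t i \<le> 1"
  using knots[of i] M by simp

lemma grid_cell_length: "i < M \<Longrightarrow> t (Suc i) - t i = 1 / real M"
  using knots[of i] knots[of "Suc i"] M by (simp add: field_simps)

lemma grid_knot_less:
  assumes "i < M"
  shows "t i < t (Suc i)"
proof -
  have "0 < 1 / real M" using M by simp
  then show ?thesis using grid_cell_length[OF assms] by linarith
qed

lemma spice_pbar_grid_approx:
  assumes i: "i < M" and y: "t i \<le> y" "y \<le> t (Suc i)"
  shows "\<bar>spice_pbar 1 t H i y - fx y\<bar> \<le> 3 * \<eta>"
proof -
  define l where "l = (y - t i) / (t (Suc i) - t i)"
  have l: "0 \<le> l" "l \<le> 1"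
    using y grid_knot_less[OF i] by (auto simp: l_def)
  have y01: "y \<in> {0..1}"
    using y grid_knot_bounds[of i] grid_knot_bounds[of "Suc i"] i by auto
  have node: "\<bar>H g - fx y\<bar> \<le> 3 * \<eta>" if "g = i \<or> g = Suc i" for g
  proof -
    have "t g \<in> {0..1}" "\<bar>t g - y\<bar> \<le> 1 / real M"
      using that grid_knot_bounds[of g] grid_cell_length[OF i] i y by auto
    then have "\<bar>fx (t g) - fx y\<bar> \<le> \<eta>"
      using oscillation y01 by blast
    moreover have "\<bar>H g - fx (t g)\<bar> \<le> 2 * \<eta>"
      using heights[of g] knots[of g] that i by auto
    ultimately show ?thesis by linarith
  qed
  have "\<bar>spice_poly 1 t H i y - fx y\<bar> \<le> 3 * \<eta>"
    unfolding spice_poly_one_eq[OF grid_knot_less[OF i, THEN less_imp_neq]]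
    using abs_convex_comb_le[OF l node node] by (simp add: l_def)
  moreover have "0 \<le> fx y" using range y01 by blast
  ultimately show ?thesis
    unfolding spice_pbar_def by linarith
qed

lemma spice_index_grid:
  fixes y :: real
  assumes y: "0 \<le> y" "y \<le> 1"
  defines "i \<equiv> spice_index (Suc M) t y"
  shows "i < M" "t i \<le> y" "y \<le> t (Suc i)"
proof -
  define S where "S = {i. i < M \<and> t i \<le> y}"
  have fin: "finite S" unfolding S_def by auto
  have "0 \<in> S" unfolding S_def using M knots[of 0] y by auto
  then have mem: "Max S \<in> S" using fin by (intro Max_in) auto
  have idx: "i = Max S" unfolding i_def spice_index_def S_def by simp
  then show "i < M" "t i \<le> y"
    using mem unfolding S_def by auto
  show "y \<le> t (Suc i)"
  proof (cases "Suc i < M")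
    case True
    then have "Suc i \<notin> S" using Max_ge[OF fin, of "Suc i"] idx by auto
    then show ?thesis using True unfolding S_def by auto
  next
    case False
    then have "Suc i = M" using mem idx unfolding S_def by auto
    then show ?thesis using knots[of M] M y by simp
  qed
qed

lemma spice_unnorm_grid_approx:
  "0 \<le> y \<Longrightarrow> y \<le> 1 \<Longrightarrow> \<bar>spice_unnorm 1 (Suc M) t H y - fx y\<bar> \<le> 3 * \<eta>"
  unfolding spice_unnorm_def using spice_pbar_grid_approx spice_index_grid by blast

lemma integral_grid_cells:
  "k \<le> M \<Longrightarrow> (\<Sum>i<k. integral {t i..t (Suc i)} fx) = integral {0..t k} fx"
proof (induction k)
  case 0
  then show ?case using knots[of 0] by simp
next
  case (Suc k)
  have "fx integrable_on {0..t (Suc k)}"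
    using grid_knot_bounds[OF Suc.prems] density
    by (intro integrable_subinterval_real[OF has_integral_integrable]) auto
  then have "integral {0..t k} fx + integral {t k..t (Suc k)} fx = integral {0..t (Suc k)} fx"
    using grid_knot_bounds[of k] grid_knot_less[of k] Suc.prems
    by (intro Henstock_Kurzweil_Integration.integral_combine) auto
  then show ?case using Suc by simp
qed

lemma spice_normalizer_grid_approx: "\<bar>spice_normalizer 1 (Suc M) t H - 1\<bar> \<le> 3 * \<eta>"
proof -
  let ?I = "\<lambda>i. {t i..t (Suc i)}"
  have cell: "\<bar>integral (?I i) (spice_pbar 1 t H i) - integral (?I i) fx\<bar> \<le> 3 * \<eta> / real M"
    if i: "i < M" for i
  proof -
    have "spice_pbar 1 t H i integrable_on ?I i"
      using grid_knot_less[OF i]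
      by (intro integrable_continuous_interval continuous_on_spice_pbar_one) simp
    moreover have "fx integrable_on ?I i"
      using grid_knot_bounds[of i] grid_knot_bounds[of "Suc i"] i density
      by (intro integrable_subinterval_real[OF has_integral_integrable]) auto
    ultimately have "((\<lambda>y. spice_pbar 1 t H i y - fx y) has_integral
        (integral (?I i) (spice_pbar 1 t H i) - integral (?I i) fx)) (?I i)"
      by (intro has_integral_diff integrable_integral)
    then have "norm (integral (?I i) (spice_pbar 1 t H i) - integral (?I i) fx)
        \<le> 3 * \<eta> * measure lborel (?I i)"
      using small spice_pbar_grid_approx[OF i]
      by (intro has_integral_bound_real[where f="\<lambda>y. spice_pbar 1 t H i y - fx y"]) auto
    then show ?thesis
      using grid_cell_length[OF i] grid_knot_less[OF i] by simp
  qed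
  have "(\<Sum>i<M. integral (?I i) fx) = 1"
    using integral_grid_cells[of M] knots[of M] M integral_unique[OF density] by simp
  then have "spice_normalizer 1 (Suc M) t H - 1
      = (\<Sum>i<M. integral (?I i) (spice_pbar 1 t H i) - integral (?I i) fx)"
    unfolding spice_normalizer_def by (simp add: sum_subtractf)
  also have "\<bar>\<dots>\<bar> \<le> (\<Sum>i<M. 3 * \<eta> / real M)"
    by (rule order_trans[OF sum_abs]) (intro sum_mono cell, simp)
  also have "\<dots> = 3 * \<eta>"
    using M by simp
  finally show ?thesis .
qed

text \<open>Dividing by a normalizer within 3 \<eta> \<le> 1/4 of 1 costs at most a factor 4/3.\<close>
lemma spice_density_grid_approx:
  assumes y: "0 \<le> y" "y \<le> 1"
  shows "\<bar>fx y - spice_unnorm 1 (Suc M) t H y / spice_normalizer 1 (Suc M) t H\<bar> \<le> 4 * \<eta> * (B + 1)"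
proof -
  define p where "p = spice_unnorm 1 (Suc M) t H y"
  define Z where "Z = spice_normalizer 1 (Suc M) t H"
  have p: "\<bar>p - fx y\<bar> \<le> 3 * \<eta>" unfolding p_def by (rule spice_unnorm_grid_approx[OF y])
  have Z: "\<bar>Z - 1\<bar> \<le> 3 * \<eta>" unfolding Z_def by (rule spice_normalizer_grid_approx)
  have f: "0 \<le> fx y" "fx y \<le> B" using range y by auto
  have Zpos: "Z \<ge> 3/4" using Z small by linarith
  have "\<bar>fx y - p / Z\<bar> = \<bar>fx y * (Z - 1) + (fx y - p)\<bar> / Z"
    using Zpos by (simp add: field_simps)
  also have "\<dots> \<le> (B * (3 * \<eta>) + 3 * \<eta>) / Z"
  proof (intro divide_right_mono)
    have "\<bar>fx y * (Z - 1)\<bar> \<le> B * (3 * \<eta>)"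
      unfolding abs_mult using f Z by (intro mult_mono) auto
    then show "\<bar>fx y * (Z - 1) + (fx y - p)\<bar> \<le> B * (3 * \<eta>) + 3 * \<eta>"
      using p by linarith
  qed (use Zpos in simp)
  also have "\<dots> \<le> (B * (3 * \<eta>) + 3 * \<eta>) / (3/4)"
    using Zpos f small by (intro divide_left_mono) auto
  also have "\<dots> = 4 * \<eta> * (B + 1)"
    by (simp add: field_simps)
  finally show ?thesis
    unfolding p_def Z_def .
qed

end

section \<open>Approximation of conditional densities\<close>

lemma continuous_on_slice:
  assumes "continuous_on (A \<times> B) (\<lambda>(x, y). f x y)" "y \<in> B"
  shows "continuous_on A (\<lambda>x. f x y)"
proof -
  have "continuous_on A ((\<lambda>(x, y). f x y) \<circ> (\<lambda>x. (x, y)))"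
    using assms by (intro continuous_on_compose continuous_intros) (auto elim: continuous_on_subset)
  then show ?thesis by (simp add: o_def)
qed

lemma compact_bounded_above:
  fixes g :: "'a::topological_space \<Rightarrow> real"
  assumes "compact S" "continuous_on S g"
  obtains B where "c \<le> B" "\<forall>z \<in> S. g z \<le> B"
proof -
  obtain a where "\<forall>z \<in> g ` S. norm z \<le> a"
    using compact_imp_bounded[OF compact_continuous_image[OF assms(2,1)]]
    unfolding bounded_iff by blast
  then show ?thesis
    by (intro that[of "max c a"]) force+
qed

lemma uniform_oscillation_grid:
  fixes f :: "'a::metric_space \<Rightarrow> real \<Rightarrow> real"
  assumes "compact A" "continuous_on (A \<times> {0..1}) (\<lambda>(x, y). f x y)" "\<eta> > 0"
  obtains M :: nat where "M \<ge> 1"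
    "\<And>x y y'. x \<in> A \<Longrightarrow> y \<in> {0..1} \<Longrightarrow> y' \<in> {0..1} \<Longrightarrow> \<bar>y - y'\<bar> \<le> 1 / real M \<Longrightarrow>
       \<bar>f x y - f x y'\<bar> \<le> \<eta>"
proof -
  have "uniformly_continuous_on (A \<times> {0..1}) (\<lambda>(x, y). f x y)"
    using assms(1,2) by (intro compact_uniformly_continuous compact_Times) auto
  then obtain d where d: "d > 0" "\<And>p q. p \<in> A \<times> {0..1} \<Longrightarrow> q \<in> A \<times> {0..1} \<Longrightarrow> dist q p < d \<Longrightarrow>
      dist ((\<lambda>(x, y). f x y) q) ((\<lambda>(x, y). f x y) p) < \<eta>"
    using assms(3) unfolding uniformly_continuous_on_def by metis
  obtain M :: nat where M: "M > 0" "inverse (real M) < d"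
    using ex_inverse_of_nat_less[OF d(1)] by auto
  show ?thesis
  proof
    show "M \<ge> 1" using M by simp
    fix x y y' assume xy: "x \<in> A" "y \<in> {0..1}" "y' \<in> {0..1}" "\<bar>y - y'\<bar> \<le> 1 / real M"
    then have "dist (x, y) (x, y') < d"
      using M by (simp add: dist_Pair_Pair dist_real_def divide_inverse)
    then show "\<bar>f x y - f x y'\<bar> \<le> \<eta>"
      using d(2)[of "(x, y')" "(x, y)"] xy by (simp add: dist_real_def)
  qed
qed

lemma positive_net_function_approx:
  fixes g :: "real^'n::finite \<Rightarrow> real"
  assumes "continuous_on unit_cube g" "\<And>x. x \<in> unit_cube \<Longrightarrow> 0 \<le> g x" "e > 0"
  shows "\<exists>h. net_function h \<and> (\<forall>x. 0 < h x) \<and> (\<forall>x\<in>unit_cube. \<bar>h x - g x\<bar> \<le> 2 * e)"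
proof -
  obtain h where h: "net_function h" "\<And>x. x \<in> unit_cube \<Longrightarrow> \<bar>g x - h x\<bar> \<le> e"
    using net_function_approx[OF assms(1,3)] by blast
  have "net_function (\<lambda>x. 1 * relu (h x) + e)"
    by (intro net_function_scale net_function_relu h(1))
  moreover have "0 < relu (h x) + e" for x
    using assms(3) by (simp add: relu_def)
  moreover have "\<bar>relu (h x) + e - g x\<bar> \<le> 2 * e" if "x \<in> unit_cube" for x
    using h(2)[OF that] assms(2)[OF that] assms(3) by (simp add: relu_def)
  ultimately show ?thesis
    by (intro exI[of _ "\<lambda>x. relu (h x) + e"]) simp
qed

lemma spice_net_uniform_knots:
  assumes M: "M \<ge> 1"
    and nets: "\<And>g. g \<le> M \<Longrightarrow> net_function (H g)"
    and pos: "\<And>g x. g \<le> M \<Longrightarrow> x \<in> unit_cube \<Longrightarrow> 0 < H g x"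
  obtains N :: "'n::finite network" where "spice_net 1 (Suc M) N"
    "\<And>x i. i \<le> M \<Longrightarrow> spice_knot (Suc M) (nn_eval N x) i = real i / real M"
    "\<And>x g. g \<le> M \<Longrightarrow> spice_height (Suc M) (nn_eval N x) g = H g x"
proof -
  define p where "p = Suc M + M + 1"
  define F where "F = (\<lambda>j. if j < Suc M then (\<lambda>x::real^'n. real j / real M) else H (j - Suc M))"
  have "net_realizable p F"
    unfolding F_def p_def using nets net_function_const
    by (intro net_realizable_of_net_functions) auto
  then obtain N :: "'n network" where N: "\<And>x. nn_eval N x = map (\<lambda>j. F j x) [0..<p]"
    unfolding net_realizable_def net_realizes_def by blast
  have knot: "spice_knot (Suc M) (nn_eval N x) i = real i / real M" if "i \<le> M" for x i
    using that unfolding spice_knot_def N by (simp add: p_def F_def del: upt_Suc)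
  have height: "spice_height (Suc M) (nn_eval N x) g = H g x" if "g \<le> M" for x g
    using that unfolding spice_height_def N by (simp add: p_def F_def del: upt_Suc)
  have "spice_net 1 (Suc M) N"
    unfolding spice_net_def Let_def
  proof (intro conjI ballI allI impI)
    fix x :: "real^'n" and i assume x: "x \<in> unit_cube"
    show "length (nn_eval N x) = Suc M + (Suc M - 1) * 1 + 1" by (simp add: N p_def)
    show "spice_knot (Suc M) (nn_eval N x) 0 = 0" using knot[of 0] by simp
    show "spice_knot (Suc M) (nn_eval N x) (Suc M - 1) = 1" using knot[of M] M by simp
    show "i < Suc M - 1 \<Longrightarrow> spice_knot (Suc M) (nn_eval N x) i \<le> spice_knot (Suc M) (nn_eval N x) (Suc i)"
      using knot[of i] knot[of "Suc i"] by (simp add: divide_right_mono)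
    show "i \<le> Suc M - 1 \<Longrightarrow> 0 < spice_height (Suc M) (nn_eval N x) (i * 1)"
      using height[of i] pos[OF _ x] by simp
  qed (use M in auto)
  then show ?thesis using that knot height by blast
qed

lemma spice_net_grid_heights:
  fixes f :: "real^'n::finite \<Rightarrow> real \<Rightarrow> real"
  assumes cont: "continuous_on (unit_cube \<times> {0..1}) (\<lambda>(x, y). f x y)"
    and nonneg: "\<forall>x \<in> unit_cube. \<forall>y \<in> {0..1}. 0 \<le> f x y"
    and "\<eta> > 0" and M: "M \<ge> 1"
  obtains N :: "'n network" where "spice_net 1 (Suc M) N"
    "\<And>x i. i \<le> M \<Longrightarrow> spice_knot (Suc M) (nn_eval N x) i = real i / real M"
    "\<And>x g. g \<le> M \<Longrightarrow> x \<in> unit_cube \<Longrightarrow>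
       \<bar>spice_height (Suc M) (nn_eval N x) g - f x (real g / real M)\<bar> \<le> 2 * \<eta>"
proof -
  have "\<exists>h. net_function h \<and> (\<forall>x. 0 < h x) \<and> (\<forall>x\<in>unit_cube. \<bar>h x - f x (real g / real M)\<bar> \<le> 2 * \<eta>)"
    if "g \<le> M" for g
    using that M nonneg \<open>\<eta> > 0\<close>
    by (intro positive_net_function_approx continuous_on_slice[OF cont]) auto
  then obtain H where H: "\<And>g. g \<le> M \<Longrightarrow> net_function (H g)" "\<And>g x. g \<le> M \<Longrightarrow> 0 < H g x"
    "\<And>g x. g \<le> M \<Longrightarrow> x \<in> unit_cube \<Longrightarrow> \<bar>H g x - f x (real g / real M)\<bar> \<le> 2 * \<eta>"
    by metis
  obtain N :: "'n network" where N: "spice_net 1 (Suc M) N"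
    "\<And>x i. i \<le> M \<Longrightarrow> spice_knot (Suc M) (nn_eval N x) i = real i / real M"
    "\<And>x g. g \<le> M \<Longrightarrow> spice_height (Suc M) (nn_eval N x) g = H g x"
    by (rule spice_net_uniform_knots[OF M H(1)]) (auto intro: H(2))
  then show ?thesis
    using that H(3) by simp
qed

theorem corollary1:
  fixes f :: "real^'n \<Rightarrow> real \<Rightarrow> real" and \<epsilon> :: real
  assumes cont: "continuous_on (unit_cube \<times> {0..1}) (\<lambda>(x, y). f x y)"
    and nonneg: "\<forall>x \<in> unit_cube. \<forall>y \<in> {0..1}. 0 \<le> f x y"
    and dens: "\<forall>x \<in> unit_cube. ((f x) has_integral 1) {0..1}"
    and eps: "\<epsilon> > 0"
  shows "\<exists>n K (N :: 'n network). spice_net n K N \<and>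
           (\<exists>\<delta> < \<epsilon>. \<forall>x \<in> unit_cube. \<forall>y \<in> {0..1}.
              \<bar>f x y - spice_density n K N x y\<bar> \<le> \<delta>)"
proof -
  have compact: "compact (unit_cube \<times> {0..1::real} :: ((real^'n) \<times> real) set)"
    by (intro compact_Times compact_unit_cube compact_Icc)
  obtain B where "\<epsilon> \<le> B" "\<forall>z \<in> unit_cube \<times> {0..1}. (\<lambda>(x, y). f x y) z \<le> B"
    by (rule compact_bounded_above[OF compact cont])
  then have B: "\<epsilon> \<le> B" "\<And>x y. x \<in> unit_cube \<Longrightarrow> y \<in> {0..1} \<Longrightarrow> f x y \<le> B"
    by auto
  define \<eta> where "\<eta> = \<epsilon> / (12 * (B + 1))"
  have \<eta>: "0 < \<eta>" "\<eta> \<le> 1/12"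
    using eps B(1) by (simp_all add: \<eta>_def divide_le_eq)
  have error: "4 * \<eta> * (B + 1) = \<epsilon> / 3"
    using eps B(1) by (simp add: \<eta>_def field_simps)
  obtain M where M: "M \<ge> 1" and osc: "\<And>x y y'. x \<in> unit_cube \<Longrightarrow> y \<in> {0..1} \<Longrightarrow> y' \<in> {0..1} \<Longrightarrow>
      \<bar>y - y'\<bar> \<le> 1 / real M \<Longrightarrow> \<bar>f x y - f x y'\<bar> \<le> \<eta>"
    using uniform_oscillation_grid[OF compact_unit_cube cont \<eta>(1)] by blast
  obtain N :: "'n network" where N: "spice_net 1 (Suc M) N"
    "\<And>x i. i \<le> M \<Longrightarrow> spice_knot (Suc M) (nn_eval N x) i = real i / real M"
    "\<And>x g. g \<le> M \<Longrightarrow> x \<in> unit_cube \<Longrightarrow>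
       \<bar>spice_height (Suc M) (nn_eval N x) g - f x (real g / real M)\<bar> \<le> 2 * \<eta>"
    using spice_net_grid_heights[OF cont nonneg \<eta>(1) M] by blast
  have "\<bar>f x y - spice_density 1 (Suc M) N x y\<bar> \<le> \<epsilon> / 3"
    if "x \<in> unit_cube" "y \<in> {0..1}" for x y
    unfolding spice_density_def Let_def error[symmetric]
    by (rule spice_density_grid_approx[where fx = "f x"])
       (use that M N osc nonneg B(2) dens \<eta> in auto)
  then show ?thesis
    using N(1) eps by (intro exI[of _ 1] exI[of _ "Suc M"] exI[of _ N] conjI exI[of _ "\<epsilon> / 3"]) auto
qed

end
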